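(* For every set of formulas $\Gamma$ and every formula $\alpha$: if $\Gamma\vDash_{\mathcal{M}_1^1}\alpha$ then $\Gamma\vdash_{L_1^1}\alpha$.
   Context: Formulas are built from a countable set of propositional variables using unary $\neg,\circ$ and binary $\land,\lor,\to$; $\circ^0\alpha=\alpha$, $\circ^{m+1}\alpha=\circ(\circ^m\alpha)$. mbC is the Hilbert calculus with the axiom schemas of a standard axiomatization of positive classical propositional logic in $\land,\lor,\to$, plus (TND) $\alpha\lor\neg\alpha$ and (bc1) $\circ\alpha\to(\alpha\to(\neg\alpha\to\beta))$, with modus ponens as only rule; mbCciw is mbC plus (ciw) $\circ\alpha\lor(\alpha\land\neg\alpha)$; $L_1^0$ is mbCciw plus $\circ\circ\circ\alpha$; $L_1^1$ is $L_1^0$ plus (cf) $\neg\neg\alpha\to\alpha$ and (ce) $\alpha\to\neg\neg\alpha$. $\Gamma\vdash_L\alpha$ means derivability in $L$. Semantics: with Boolean operations $\land,\lor,\to,\sim$ on $\{0,1\}$, let $\mathbb{B}_1^0=\{x\in\{0,1\}^3: x_1\lor x_2=1,\ x_3\lor\sim(x_1\land x_2)=1\}$. The multialgebra $\mathcal{B}_1^1$ on $\mathbb{B}_1^0$ has $x\# y=\{z\in\mathbb{B}_1^0: z_1=x_1\# y_1\}$ for $\#\in\{\land,\lor,\to\}$, $\neg x=\{z\in\mathbb{B}_1^0: z_1=x_2 \text{ and } z_2=x_1\}$, $\circ x=\{(\sim(x_1\land x_2),x_3,x_3\land\sim(x_1\land x_2))\}$. $D_1^0=\{x:x_1=1\}$,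 $\mathcal{M}_1^1=(\mathcal{B}_1^1,D_1^0)$. Valuations over $\mathcal{M}_1^1$ are maps $h$ from formulas to $\mathbb{B}_1^0$ with $h(\alpha\#\beta)\in h(\alpha)\#h(\beta)$, $h(\neg\alpha)\in\neg h(\alpha)$, $h(\circ\alpha)\in\circ h(\alpha)$; $\Gamma\vDash_{\mathcal{M}_1^1}\alpha$ iff every valuation $h$ with $h[\Gamma]\subseteq D_1^0$ has $h(\alpha)\in D_1^0$. *)

theory Defs
  imports Main
begin

datatype fm =
    Var nat
  | Neg fm
  | Circ fm
  | Conj fm fm
  | Disj fm fm
  | Imp fm fm

primrec circ_pow :: "nat \<Rightarrow> fm \<Rightarrow> fm" where
  "circ_pow 0 a = a"
| "circ_pow (Suc m) a = Circ (circ_pow m a)"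

text \<open>Axioms of positive classical logic (Ax1--Ax9 of the standard
 axiomatization used for mbC), TND, bc1, ciw, the schema circ circ circ a,
 cf and ce.\<close>

inductive_set L11_axioms :: "fm set" where
  Ax1: "Imp a (Imp b a) \<in> L11_axioms"
| Ax2: "Imp (Imp a b) (Imp (Imp a (Imp b c)) (Imp a c)) \<in> L11_axioms"
| Ax3: "Imp a (Imp b (Conj a b)) \<in> L11_axioms"
| Ax4: "Imp (Conj a b) a \<in> L11_axioms"
| Ax5: "Imp (Conj a b) b \<in> L11_axioms"
| Ax6: "Imp a (Disj a b) \<in> L11_axioms"
| Ax7: "Imp b (Disj a b) \<in> L11_axioms"
| Ax8: "Imp (Imp a c) (Imp (Imp b c) (Imp (Disj a b) c)) \<in> L11_axioms"
| Ax9: "Disj a (Imp a b) \<in> L11_axioms"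
| TND: "Disj a (Neg a) \<in> L11_axioms"
| bc1: "Imp (Circ a) (Imp a (Imp (Neg a) b)) \<in> L11_axioms"
| ciw: "Disj (Circ a) (Conj a (Neg a)) \<in> L11_axioms"
| circ3: "circ_pow 3 a \<in> L11_axioms"
| cf: "Imp (Neg (Neg a)) a \<in> L11_axioms"
| ce: "Imp a (Neg (Neg a)) \<in> L11_axioms"

inductive L11_derivable :: "fm set \<Rightarrow> fm \<Rightarrow> bool" where
  hyp: "a \<in> \<Gamma> \<Longrightarrow> L11_derivable \<Gamma> a"
| ax: "a \<in> L11_axioms \<Longrightarrow> L11_derivable \<Gamma> a"
| mp: "L11_derivable \<Gamma> a \<Longrightarrow> L11_derivable \<Gamma> (Imp a b) \<Longrightarrow> L11_derivable \<Gamma> b"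

type_synonym tv = "bool \<times> bool \<times> bool"

definition B10 :: "tv set" where
  "B10 = {(x1, x2, x3). (x1 \<or> x2) \<and> (x3 \<or> \<not> (x1 \<and> x2))}"

definition D10 :: "tv set" where
  "D10 = {x \<in> B10. fst x}"

definition mconj :: "tv \<Rightarrow> tv \<Rightarrow> tv set" where
  "mconj x y = {z \<in> B10. fst z = (fst x \<and> fst y)}"
definition mdisj :: "tv \<Rightarrow> tv \<Rightarrow> tv set" where
  "mdisj x y = {z \<in> B10. fst z = (fst x \<or> fst y)}"
definition mimp :: "tv \<Rightarrow> tv \<Rightarrow> tv set" where
  "mimp x y = {z \<in> B10. fst z = (fst x \<longrightarrow> fst y)}"
definition mneg :: "tv \<Rightarrow> tv set" where
  "mneg x = {z \<in> B10. fst z = fst (snd x) \<and> fst (snd z) = fst x}"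
definition mcirc :: "tv \<Rightarrow> tv set" where
  "mcirc x = (case x of (x1, x2, x3) \<Rightarrow>
      {(\<not> (x1 \<and> x2), x3, x3 \<and> \<not> (x1 \<and> x2))})"

definition valuation :: "(fm \<Rightarrow> tv) \<Rightarrow> bool" where
  "valuation h \<longleftrightarrow>
     (\<forall>a. h a \<in> B10) \<and>
     (\<forall>a b. h (Conj a b) \<in> mconj (h a) (h b)) \<and>
     (\<forall>a b. h (Disj a b) \<in> mdisj (h a) (h b)) \<and>
     (\<forall>a b. h (Imp a b) \<in> mimp (h a) (h b)) \<and>
     (\<forall>a. h (Neg a) \<in> mneg (h a)) \<and>
     (\<forall>a. h (Circ a) \<in> mcirc (h a))"

definition M11_consequence :: "fm set \<Rightarrow> fm \<Rightarrow> bool" where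
  "M11_consequence \<Gamma> a \<longleftrightarrow>
     (\<forall>h. valuation h \<longrightarrow> h ` \<Gamma> \<subseteq> D10 \<longrightarrow> h a \<in> D10)"

end

theory Submission
  imports Defs
begin

text \<open>Completeness is proved by the canonical-model method. If \<open>\<Gamma>\<close> does not derive \<open>\<alpha>\<close>,
  Lindenbaum's lemma extends \<open>\<Gamma>\<close> to a set \<open>D\<close> that is \<open>\<alpha>\<close>-saturated: \<open>D\<close> does not derive \<open>\<alpha>\<close>,
  but every proper extension does. Membership in \<open>D\<close> then behaves classically on the
  positive connectives, and the map \<open>b \<mapsto> (b \<in> D, \<not>b \<in> D, \<not>\<circ>b \<in> D)\<close> is a valuation of
  \<open>\<M>\<^sub>1\<^sup>1\<close> that designates all of \<open>\<Gamma>\<close> but not \<open>\<alpha>\<close>.\<close>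

lemma L11_derivable_mono:
  "L11_derivable \<Gamma> a \<Longrightarrow> \<Gamma> \<subseteq> \<Delta> \<Longrightarrow> L11_derivable \<Delta> a"
  by (induction rule: L11_derivable.induct) (auto intro: L11_derivable.intros)

lemma L11_derivable_finite_subset:
  "L11_derivable \<Gamma> a \<Longrightarrow> \<exists>\<Gamma>'. finite \<Gamma>' \<and> \<Gamma>' \<subseteq> \<Gamma> \<and> L11_derivable \<Gamma>' a"
proof (induction rule: L11_derivable.induct)
  case (hyp a \<Gamma>)
  then show ?case by (intro exI[of _ "{a}"]) (auto intro: L11_derivable.hyp)
next
  case (ax a \<Gamma>)
  then show ?case by (intro exI[of _ "{}"]) (auto intro: L11_derivable.ax)
next
  case (mp \<Gamma> a b)
  then obtain \<Gamma>\<^sub>1 \<Gamma>\<^sub>2 where "finite \<Gamma>\<^sub>1" "\<Gamma>\<^sub>1 \<subseteq> \<Gamma>" "L11_derivable \<Gamma>\<^sub>1 a"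
    and "finite \<Gamma>\<^sub>2" "\<Gamma>\<^sub>2 \<subseteq> \<Gamma>" "L11_derivable \<Gamma>\<^sub>2 (Imp a b)"
    by blast
  then show ?case
    by (intro exI[of _ "\<Gamma>\<^sub>1 \<union> \<Gamma>\<^sub>2"]) (auto intro: L11_derivable.mp L11_derivable_mono)
qed

lemma L11_derivable_Imp_refl: "L11_derivable \<Gamma> (Imp a a)"
proof -
  have "L11_derivable \<Gamma> (Imp a (Imp a a))"
    and "L11_derivable \<Gamma> (Imp a (Imp (Imp a a) a))"
    and "L11_derivable \<Gamma> (Imp (Imp a (Imp a a)) (Imp (Imp a (Imp (Imp a a) a)) (Imp a a)))"
    by (auto intro: L11_derivable.ax L11_axioms.intros)
  then show ?thesis by (blast intro: L11_derivable.mp)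
qed

lemma L11_deduction:
  assumes "L11_derivable (insert a \<Gamma>) b"
  shows "L11_derivable \<Gamma> (Imp a b)"
  using assms
proof (induction "insert a \<Gamma>" b rule: L11_derivable.induct)
  case (hyp b)
  then consider "b = a" | "b \<in> \<Gamma>" by blast
  then show ?case
  proof cases
    case 1
    then show ?thesis by (simp add: L11_derivable_Imp_refl)
  next
    case 2
    then show ?thesis
      by (blast intro: L11_derivable.mp L11_derivable.hyp L11_derivable.ax L11_axioms.Ax1)
  qed
next
  case (ax b)
  then show ?case by (blast intro: L11_derivable.mp L11_derivable.ax L11_axioms.Ax1)
next
  case (mp c b)
  have "L11_derivable \<Gamma> (Imp (Imp a c) (Imp (Imp a (Imp c b)) (Imp a b)))"
    by (intro L11_derivable.ax L11_axioms.Ax2)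
  with mp.hyps show ?case by (blast intro: L11_derivable.mp)
qed

lemma L11_derivable_Union_chain:
  assumes "L11_derivable (\<Union>\<C>) a" and "\<C> \<noteq> {}" and "subset.chain \<A> \<C>"
  obtains X where "X \<in> \<C>" and "L11_derivable X a"
proof -
  obtain \<Gamma>' where "finite \<Gamma>'" "\<Gamma>' \<subseteq> \<Union>\<C>" "L11_derivable \<Gamma>' a"
    using L11_derivable_finite_subset[OF assms(1)] by blast
  moreover obtain X where "X \<in> \<C>" "\<Gamma>' \<subseteq> X"
    using finite_subset_Union_chain[OF \<open>finite \<Gamma>'\<close> \<open>\<Gamma>' \<subseteq> \<Union>\<C>\<close> assms(2,3)] by blast
  ultimately show ?thesis using that L11_derivable_mono by blast
qed

locale saturated =
  fixes D :: "fm set" and \<alpha> :: fm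
  assumes not_derivable: "\<not> L11_derivable D \<alpha>"
    and derivable_insert: "\<And>b. b \<notin> D \<Longrightarrow> L11_derivable (insert b D) \<alpha>"
begin

lemma closed: "L11_derivable D b \<Longrightarrow> b \<in> D"
  using derivable_insert L11_deduction L11_derivable.mp not_derivable by blast

lemma axiom_in: "b \<in> L11_axioms \<Longrightarrow> b \<in> D"
  by (simp add: closed L11_derivable.ax)

lemma Imp_mp: "Imp a b \<in> D \<Longrightarrow> a \<in> D \<Longrightarrow> b \<in> D"
  by (meson closed L11_derivable.hyp L11_derivable.mp)

lemma Conj_in_iff: "Conj a b \<in> D \<longleftrightarrow> a \<in> D \<and> b \<in> D"
  using Imp_mp axiom_in[OF Ax3] axiom_in[OF Ax4] axiom_in[OF Ax5] by blast

lemma Disj_in_iff: "Disj a b \<in> D \<longleftrightarrow> a \<in> D \<or> b \<in> D"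
proof
  assume ab: "Disj a b \<in> D"
  show "a \<in> D \<or> b \<in> D"
  proof (rule ccontr)
    assume "\<not> (a \<in> D \<or> b \<in> D)"
    then have "Imp a \<alpha> \<in> D" and "Imp b \<alpha> \<in> D"
      using derivable_insert L11_deduction closed by blast+
    with ab have "\<alpha> \<in> D" using Imp_mp axiom_in[OF Ax8] by blast
    then show False using not_derivable L11_derivable.hyp by blast
  qed
next
  assume "a \<in> D \<or> b \<in> D"
  then show "Disj a b \<in> D" using Imp_mp axiom_in[OF Ax6] axiom_in[OF Ax7] by blast
qed

lemma Imp_in_iff: "Imp a b \<in> D \<longleftrightarrow> (a \<in> D \<longrightarrow> b \<in> D)"
  using Imp_mp axiom_in[OF Ax1] Disj_in_iff axiom_in[OF Ax9, of a b] by blast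

lemma Neg_Neg_in_iff: "Neg (Neg a) \<in> D \<longleftrightarrow> a \<in> D"
  using Imp_mp axiom_in[OF cf] axiom_in[OF ce] by blast

lemma in_or_Neg_in: "a \<in> D \<or> Neg a \<in> D"
  using Disj_in_iff axiom_in[OF TND] by blast

lemma Circ_in_iff: "Circ a \<in> D \<longleftrightarrow> \<not> (a \<in> D \<and> Neg a \<in> D)"
proof -
  have "\<not> (Circ a \<in> D \<and> a \<in> D \<and> Neg a \<in> D)"
    using Imp_mp axiom_in[OF bc1, of a \<alpha>] not_derivable L11_derivable.hyp by blast
  moreover have "Circ a \<in> D \<or> (a \<in> D \<and> Neg a \<in> D)"
    using Disj_in_iff Conj_in_iff axiom_in[OF ciw] by blast
  ultimately show ?thesis by blast
qed

text \<open>This is where the axiom \<open>\<circ>\<circ>\<circ>a\<close> is needed: it makes the third coordinate of the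
  canonical valuation commute with \<open>mcirc\<close>.\<close>

lemma Neg_Circ_Circ_in_iff: "Neg (Circ (Circ a)) \<in> D \<longleftrightarrow> Neg (Circ a) \<in> D \<and> Circ a \<in> D"
proof -
  have "Circ (Circ (Circ a)) \<in> D"
    using axiom_in[OF circ3, of a] by (simp add: numeral_eq_Suc)
  then show ?thesis
    using Circ_in_iff[of "Circ a"] Circ_in_iff[of "Circ (Circ a)"] in_or_Neg_in[of "Circ (Circ a)"]
    by blast
qed

definition canonical_valuation :: "fm \<Rightarrow> tv" where
  "canonical_valuation b = (b \<in> D, Neg b \<in> D, Neg (Circ b) \<in> D)"

lemma canonical_valuation_in_D10_iff: "canonical_valuation b \<in> D10 \<longleftrightarrow> b \<in> D"
  using in_or_Neg_in[of b] in_or_Neg_in[of "Circ b"] Circ_in_iff[of b]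
  by (auto simp: D10_def B10_def canonical_valuation_def)

lemma valuation_canonical_valuation: "valuation canonical_valuation"
proof -
  let ?h = canonical_valuation
  have B: "?h b \<in> B10" for b
    using in_or_Neg_in[of b] in_or_Neg_in[of "Circ b"] Circ_in_iff[of b]
    by (auto simp: B10_def canonical_valuation_def)
  have "?h (Conj a b) \<in> mconj (?h a) (?h b)" for a b
    using B[of "Conj a b"] by (simp add: mconj_def canonical_valuation_def Conj_in_iff)
  moreover have "?h (Disj a b) \<in> mdisj (?h a) (?h b)" for a b
    using B[of "Disj a b"] by (simp add: mdisj_def canonical_valuation_def Disj_in_iff)
  moreover have "?h (Imp a b) \<in> mimp (?h a) (?h b)" for a b
    using B[of "Imp a b"] by (simp add: mimp_def canonical_valuation_def Imp_in_iff)
  moreover have "?h (Neg b) \<in> mneg (?h b)" for b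
    using B[of "Neg b"] by (simp add: mneg_def canonical_valuation_def Neg_Neg_in_iff)
  moreover have "?h (Circ b) \<in> mcirc (?h b)" for b
    using Neg_Circ_Circ_in_iff[of b] Circ_in_iff[of b]
    by (auto simp: mcirc_def canonical_valuation_def)
  ultimately show ?thesis using B unfolding valuation_def by blast
qed

end

lemma L11_Lindenbaum:
  assumes "\<not> L11_derivable \<Gamma> \<alpha>"
  obtains D where "\<Gamma> \<subseteq> D" and "saturated D \<alpha>"
proof -
  let ?\<A> = "{D. \<Gamma> \<subseteq> D \<and> \<not> L11_derivable D \<alpha>}"
  have "\<Union>\<C> \<in> ?\<A>" if "\<C> \<noteq> {}" and chain: "subset.chain ?\<A> \<C>" for \<C>
  proof -
    have "\<C> \<subseteq> ?\<A>" using chain by (simp add: subset.chain_def)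
    then show ?thesis
      using \<open>\<C> \<noteq> {}\<close> L11_derivable_Union_chain[OF _ \<open>\<C> \<noteq> {}\<close> chain] by blast
  qed
  moreover have "?\<A> \<noteq> {}" using assms by blast
  ultimately obtain D where "D \<in> ?\<A>" and "\<forall>X\<in>?\<A>. D \<subseteq> X \<longrightarrow> X = D"
    using subset_Zorn_nonempty[of ?\<A>] by blast
  then have "saturated D \<alpha>"
    by unfold_locales blast+
  with \<open>D \<in> ?\<A>\<close> show ?thesis using that by blast
qed

theorem theorem9:
  fixes \<Gamma> :: "fm set" and \<alpha> :: fm
  assumes "M11_consequence \<Gamma> \<alpha>"
  shows "L11_derivable \<Gamma> \<alpha>"
proof (rule ccontr)
  assume "\<not> L11_derivable \<Gamma> \<alpha>"
  then obtain D where "\<Gamma> \<subseteq> D" and "saturated D \<alpha>"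
    by (rule L11_Lindenbaum)
  interpret saturated D \<alpha> by fact
  have "canonical_valuation ` \<Gamma> \<subseteq> D10"
    using \<open>\<Gamma> \<subseteq> D\<close> canonical_valuation_in_D10_iff by blast
  then have "\<alpha> \<in> D"
    using assms valuation_canonical_valuation canonical_valuation_in_D10_iff
    unfolding M11_consequence_def by blast
  then show False using not_derivable L11_derivable.hyp by blast
qed

end
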